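(* Let $G$ be a fullerene graph. If $G$ has a perfect star packing, then the number of vertices of $G$ is divisible by $8$.
   Context: A fullerene graph is a finite simple connected (equivalently, $3$-connected) plane cubic graph all of whose faces are pentagons or hexagons. A perfect star packing of a graph $G$ is a spanning subgraph of $G$ every connected component of which is isomorphic to the star $K_{1,3}$. *)

theory Defs
  imports Main
begin

text \<open>Simple graphs: finite vertex set V, edges as a symmetric irreflexive
  set of ordered pairs (darts) E; each undirected edge {u,v} appears as (u,v) and (v,u).\<close>

definition simple_graph :: "'a set \<Rightarrow> ('a \<times> 'a) set \<Rightarrow> bool" where
  "simple_graph V E \<longleftrightarrow> finite V \<and> E \<subseteq> V \<times> V \<and> sym E \<and> (\<forall>v. (v, v) \<notin> E)"

definition nbrs :: "('a \<times> 'a) set \<Rightarrow> 'a \<Rightarrow> 'a set" where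
  "nbrs E v = {u. (v, u) \<in> E}"

definition cubic :: "'a set \<Rightarrow> ('a \<times> 'a) set \<Rightarrow> bool" where
  "cubic V E \<longleftrightarrow> (\<forall>v\<in>V. card (nbrs E v) = 3)"

definition connected_graph :: "'a set \<Rightarrow> ('a \<times> 'a) set \<Rightarrow> bool" where
  "connected_graph V E \<longleftrightarrow> V \<noteq> {} \<and> (\<forall>u\<in>V. \<forall>v\<in>V. (u, v) \<in> E\<^sup>*)"

definition rotation_system :: "'a set \<Rightarrow> ('a \<times> 'a) set \<Rightarrow> ('a \<Rightarrow> 'a \<Rightarrow> 'a) \<Rightarrow> bool" where
  "rotation_system V E rot \<longleftrightarrow>
     (\<forall>v\<in>V. rot v ` nbrs E v = nbrs E v \<and>
        (\<forall>u\<in>nbrs E v. \<forall>w\<in>nbrs E v. \<exists>k. (rot v ^^ k) u = w))"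

text \<open>Face-tracing permutation on darts; faces are its orbits.\<close>
definition face_step :: "('a \<Rightarrow> 'a \<Rightarrow> 'a) \<Rightarrow> 'a \<times> 'a \<Rightarrow> 'a \<times> 'a" where
  "face_step rot d = (snd d, rot (snd d) (fst d))"

definition face_of :: "('a \<Rightarrow> 'a \<Rightarrow> 'a) \<Rightarrow> 'a \<times> 'a \<Rightarrow> ('a \<times> 'a) set" where
  "face_of rot d = {(face_step rot ^^ k) d | k. True}"

definition faces :: "('a \<times> 'a) set \<Rightarrow> ('a \<Rightarrow> 'a \<Rightarrow> 'a) \<Rightarrow> ('a \<times> 'a) set set" where
  "faces E rot = face_of rot ` E"

text \<open>The embedding given by rot is planar (spherical) iff Euler's formula
  V - E + F = 2 holds (card E counts darts = twice the number of edges).\<close>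
definition plane_embedding :: "'a set \<Rightarrow> ('a \<times> 'a) set \<Rightarrow> ('a \<Rightarrow> 'a \<Rightarrow> 'a) \<Rightarrow> bool" where
  "plane_embedding V E rot \<longleftrightarrow> rotation_system V E rot \<and>
     2 * int (card V) - int (card E) + 2 * int (card (faces E rot)) = 4"

text \<open>A face is a pentagon (hexagon) if its boundary walk is a cycle of length 5 (6).\<close>
definition penta_or_hexa :: "('a \<times> 'a) set \<Rightarrow> bool" where
  "penta_or_hexa f \<longleftrightarrow> card f \<in> {5, 6} \<and> card (fst ` f) = card f"

definition fullerene :: "'a set \<Rightarrow> ('a \<times> 'a) set \<Rightarrow> bool" where
  "fullerene V E \<longleftrightarrow> simple_graph V E \<and> connected_graph V E \<and> cubic V E \<and>
     (\<exists>rot. plane_embedding V E rot \<and> (\<forall>f\<in>faces E rot. penta_or_hexa f))"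

definition is_star_K13 :: "'a set \<Rightarrow> ('a \<times> 'a) set \<Rightarrow> bool" where
  "is_star_K13 C H \<longleftrightarrow> card C = 4 \<and>
     (\<exists>c\<in>C. H \<inter> (C \<times> C) = {(c, x) | x. x \<in> C - {c}} \<union> {(x, c) | x. x \<in> C - {c}})"

definition perfect_star_packing :: "'a set \<Rightarrow> ('a \<times> 'a) set \<Rightarrow> bool" where
  "perfect_star_packing V E \<longleftrightarrow>
     (\<exists>H. H \<subseteq> E \<and> sym H \<and> (\<forall>v\<in>V. is_star_K13 {u. (v, u) \<in> H\<^sup>*} H))"

end

(*
  In a cubic graph the centres of a perfect star packing form a perfect code D: the closed
  neighbourhoods of the centres partition the vertices, so card V = 4 * card D, and it remains
  to show that D has even size.

  Every vertex lies on exactly three faces, and a face of length at most six carries at most two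
  centres, because each centre on it occupies three consecutive vertices of its boundary and these
  triples are disjoint. Hence 3 * card D, the number of incidences between centres and faces, has
  the parity of the number of faces carrying exactly one centre. These faces are matched in pairs:
  walking back along such a face from its centre c through a neighbour x of c to the next vertex w,
  the face on the other side of the edge xw carries exactly one centre as well, namely the third
  neighbour of w. So there is an even number of them.
*)

theory Submission
  imports Defs "HOL-Combinatorics.Orbits" "HOL-Library.Z2"
begin

section \<open>Fixed-point-free involutions\<close>

lemma even_card_if_fixpoint_free_involution:
  assumes "\<And>x. x \<in> X \<Longrightarrow> h x \<in> X" "\<And>x. x \<in> X \<Longrightarrow> h (h x) = x" "\<And>x. x \<in> X \<Longrightarrow> h x \<noteq> x"
  shows "even (card X)"
proof -
  have "(\<Sum>x\<in>X. 1 :: bit) = 0"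
    by (rule sum_involution_eq_0[where h = h]) (use assms in \<open>simp_all\<close>)
  then have "of_nat (card X) = (0 :: bit)" by simp
  then show ?thesis by (metis even_of_nat_iff even_zero)
qed

lemma even_card_if_perfectly_matched:
  assumes "\<And>x. x \<in> X \<Longrightarrow> \<exists>!y\<in>X. R x y"
    and "\<And>x y. R x y \<Longrightarrow> R y x" and "\<And>x. x \<in> X \<Longrightarrow> \<not> R x x"
  shows "even (card X)"
proof -
  define h where "h x = (THE y. y \<in> X \<and> R x y)" for x
  have h: "h x \<in> X \<and> R x (h x)" if "x \<in> X" for x
    unfolding h_def using theI'[OF assms(1)[OF that]] .
  show ?thesis
  proof (rule even_card_if_fixpoint_free_involution)
    show "h x \<in> X" if "x \<in> X" for x using h that by blast
    show "h (h x) = x" if "x \<in> X" for x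
      using h[OF that] h[of "h x"] assms(1)[of "h x"] assms(2) that by blast
    show "h x \<noteq> x" if "x \<in> X" for x using h[OF that] assms(3)[OF that] by metis
  qed
qed

section \<open>Perfect codes and perfect star packings\<close>

definition closed_nbrs :: "('a \<times> 'a) set \<Rightarrow> 'a \<Rightarrow> 'a set" where
  "closed_nbrs E v = insert v (nbrs E v)"

definition perfect_code :: "'a set \<Rightarrow> ('a \<times> 'a) set \<Rightarrow> 'a set \<Rightarrow> bool" where
  "perfect_code V E D \<longleftrightarrow> D \<subseteq> V \<and> (\<forall>v\<in>V. \<exists>!c\<in>D. v \<in> closed_nbrs E c)"

lemma star_component:
  assumes "is_star_K13 {u. (v, u) \<in> H\<^sup>*} H"
  shows "\<exists>C c. card C = 4 \<and> c \<in> C \<and> v \<in> C \<and>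
    (\<forall>u\<in>C. nbrs H u = (if u = c then C - {c} else {c}))"
proof -
  define C where "C = {u. (v, u) \<in> H\<^sup>*}"
  obtain c where c: "c \<in> C" "card C = 4"
    and star: "H \<inter> (C \<times> C) = {(c, x) | x. x \<in> C - {c}} \<union> {(x, c) | x. x \<in> C - {c}}"
    using assms unfolding is_star_K13_def C_def by blast
  have closed: "w \<in> C" if "u \<in> C" "(u, w) \<in> H" for u w
    using that unfolding C_def by (auto intro: rtrancl_into_rtrancl)
  have "nbrs H u = (if u = c then C - {c} else {c})" if "u \<in> C" for u
  proof -
    have "nbrs H u = {w. (u, w) \<in> H \<inter> (C \<times> C)}"
      using closed that unfolding nbrs_def by auto
    also have "\<dots> = (if u = c then C - {c} else {c})"
      unfolding star using that c by auto
    finally show ?thesis .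
  qed
  moreover have "v \<in> C" unfolding C_def by simp
  ultimately show ?thesis using c by blast
qed

locale cubic_graph =
  fixes V :: "'a set" and E :: "('a \<times> 'a) set"
  assumes simple: "simple_graph V E" and cubic: "cubic V E"
begin

lemma finite_V: "finite V"
  using simple by (simp add: simple_graph_def)

lemma edge_in_V: "(u, v) \<in> E \<Longrightarrow> u \<in> V \<and> v \<in> V"
  using simple by (auto simp: simple_graph_def)

lemma edge_sym: "(u, v) \<in> E \<Longrightarrow> (v, u) \<in> E"
  using simple by (auto simp: simple_graph_def dest: symD)

lemma no_loop: "(v, v) \<notin> E"
  using simple by (simp add: simple_graph_def)

lemma finite_E: "finite E"
  using simple finite_subset[OF _ finite_cartesian_product[OF finite_V finite_V]]
  by (simp add: simple_graph_def)

lemma mem_nbrs [simp]: "u \<in> nbrs E v \<longleftrightarrow> (v, u) \<in> E"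
  by (simp add: nbrs_def)

lemma nbrs_subset_V: "nbrs E v \<subseteq> V"
  using edge_in_V by auto

lemma finite_nbrs: "finite (nbrs E v)"
  using finite_subset[OF nbrs_subset_V finite_V] .

lemma card_nbrs: "v \<in> V \<Longrightarrow> card (nbrs E v) = 3"
  using cubic by (simp add: cubic_def)

lemma card_closed_nbrs: "v \<in> V \<Longrightarrow> card (closed_nbrs E v) = 4"
  using card_nbrs finite_nbrs no_loop by (simp add: closed_nbrs_def)

lemma perfect_code_closed_nbrs_disjoint:
  assumes "perfect_code V E D" "c \<in> D" "c' \<in> D" "c \<noteq> c'"
  shows "closed_nbrs E c \<inter> closed_nbrs E c' = {}"
proof -
  have "closed_nbrs E c \<subseteq> V"
    using assms(1,2) nbrs_subset_V by (auto simp: perfect_code_def closed_nbrs_def)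
  then show ?thesis using assms unfolding perfect_code_def by blast
qed

lemma card_perfect_code:
  assumes "perfect_code V E D"
  shows "card V = 4 * card D"
proof -
  have DV: "D \<subseteq> V" and code: "\<forall>v\<in>V. \<exists>!c\<in>D. v \<in> closed_nbrs E c"
    using assms by (auto simp: perfect_code_def)
  have "V = (\<Union>c\<in>D. closed_nbrs E c)"
  proof
    show "V \<subseteq> (\<Union>c\<in>D. closed_nbrs E c)" using code by blast
    show "(\<Union>c\<in>D. closed_nbrs E c) \<subseteq> V"
      using DV nbrs_subset_V by (auto simp: closed_nbrs_def)
  qed
  moreover have "card (\<Union>c\<in>D. closed_nbrs E c) = (\<Sum>c\<in>D. card (closed_nbrs E c))"
  proof (rule card_UN_disjoint)
    show "finite D" using DV finite_V finite_subset by blast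
    show "\<forall>c\<in>D. finite (closed_nbrs E c)" by (simp add: closed_nbrs_def finite_nbrs)
    show "\<forall>c\<in>D. \<forall>c'\<in>D. c \<noteq> c' \<longrightarrow> closed_nbrs E c \<inter> closed_nbrs E c' = {}"
      using perfect_code_closed_nbrs_disjoint[OF assms] by blast
  qed
  moreover have "(\<Sum>c\<in>D. card (closed_nbrs E c)) = 4 * card D"
    using DV card_closed_nbrs by (simp add: subset_iff)
  ultimately show ?thesis by simp
qed

lemma perfect_code_not_adjacent:
  assumes "perfect_code V E D" "c \<in> D" "c' \<in> D"
  shows "(c, c') \<notin> E"
proof
  assume "(c, c') \<in> E"
  then have "c' \<in> closed_nbrs E c" "c' \<in> closed_nbrs E c'" "c' \<in> V"
    using edge_in_V by (auto simp: closed_nbrs_def)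
  then have "c = c'" using assms unfolding perfect_code_def by blast
  then show False using \<open>(c, c') \<in> E\<close> no_loop by simp
qed

lemma perfect_code_adjacent_unique:
  assumes "perfect_code V E D" "c \<in> D" "c' \<in> D" "(v, c) \<in> E" "(v, c') \<in> E"
  shows "c = c'"
proof -
  have "v \<in> closed_nbrs E c" "v \<in> closed_nbrs E c'" "v \<in> V"
    using assms(4,5) edge_sym edge_in_V by (auto simp: closed_nbrs_def)
  then show ?thesis using assms(1-3) unfolding perfect_code_def by blast
qed

lemma perfect_code_dominates:
  assumes "perfect_code V E D" "v \<in> V" "v \<notin> D"
  obtains c where "c \<in> D" "(v, c) \<in> E"
proof -
  obtain c where "c \<in> D" "v \<in> closed_nbrs E c"
    using assms(1,2) unfolding perfect_code_def by blast
  then show thesis using that assms(3) edge_sym by (auto simp: closed_nbrs_def)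
qed

text \<open>The centres of the stars form a perfect code: in a cubic graph a centre is joined
  by star edges to all its neighbours.\<close>

lemma perfect_code_of_perfect_star_packing:
  assumes "perfect_star_packing V E"
  obtains D where "perfect_code V E D"
proof -
  obtain H where HE: "H \<subseteq> E" and "sym H" and star: "\<forall>v\<in>V. is_star_K13 {u. (v, u) \<in> H\<^sup>*} H"
    using assms unfolding perfect_star_packing_def by blast
  define D where "D = {v \<in> V. card (nbrs H v) = 3}"
  have nbrs_H: "nbrs H c = nbrs E c" if "c \<in> D" for c
  proof (rule card_subset_eq[OF finite_nbrs])
    show "nbrs H c \<subseteq> nbrs E c" using HE by (auto simp: nbrs_def)
    show "card (nbrs H c) = card (nbrs E c)" using that card_nbrs by (simp add: D_def)
  qed
  have "\<exists>!c\<in>D. v \<in> closed_nbrs E c" if v: "v \<in> V" for v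
  proof -
    have "is_star_K13 {u. (v, u) \<in> H\<^sup>*} H" using star v by blast
    then obtain C c where C: "card C = 4" "c \<in> C" "v \<in> C"
      and star_nbrs: "\<forall>u\<in>C. nbrs H u = (if u = c then C - {c} else {c})"
      by (blast dest: star_component)
    have "finite C" using C(1) by (simp add: card_ge_0_finite)
    then have card_c: "card (nbrs H c) = 3"
      using star_nbrs[rule_format, OF C(2)] C(1,2) by simp
    have v_c: "v \<noteq> c \<Longrightarrow> nbrs H v = {c}"
      using star_nbrs[rule_format, OF C(3)] by simp
    have "v = c \<or> (v, c) \<in> E"
      using v_c HE by (auto simp: nbrs_def)
    then have "c \<in> V" "v \<in> closed_nbrs E c"
      using v edge_in_V edge_sym by (auto simp: closed_nbrs_def)
    then have "c \<in> D" using card_c by (simp add: D_def)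
    moreover note \<open>v \<in> closed_nbrs E c\<close>
    moreover have "c' = c" if c': "c' \<in> D" "v \<in> closed_nbrs E c'" for c'
    proof (cases "v = c'")
      case True
      then have "card (nbrs H v) = 3" using c'(1) by (simp add: D_def)
      then have "v = c" using v_c by fastforce
      then show ?thesis using \<open>v = c'\<close> by simp
    next
      case False
      then have "(c', v) \<in> H" using c' nbrs_H by (auto simp: closed_nbrs_def nbrs_def)
      then have c'_v: "c' \<in> nbrs H v" using \<open>sym H\<close> by (auto simp: nbrs_def dest: symD)
      show ?thesis
      proof (rule ccontr)
        assume "c' \<noteq> c"
        then have "v = c" using c'_v v_c by blast
        then have "c' \<in> C - {c}" using c'_v star_nbrs[rule_format, OF C(2)] by simp
        then have "nbrs H c' = {c}" using star_nbrs by simp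
        then show False using c'(1) by (simp add: D_def)
      qed
    qed
    ultimately show ?thesis by blast
  qed
  moreover have "D \<subseteq> V" by (auto simp: D_def)
  ultimately have "perfect_code V E D" by (simp add: perfect_code_def)
  then show thesis by (rule that)
qed

end

section \<open>Faces of a cubic map\<close>

locale cubic_map = cubic_graph +
  fixes rot :: "'a \<Rightarrow> 'a \<Rightarrow> 'a"
  assumes rotation: "rotation_system V E rot"
begin

lemma rot_in_nbrs: "v \<in> V \<Longrightarrow> u \<in> nbrs E v \<Longrightarrow> rot v u \<in> nbrs E v"
  using rotation unfolding rotation_system_def by blast

lemma inj_on_rot: "v \<in> V \<Longrightarrow> inj_on (rot v) (nbrs E v)"
  using rotation finite_nbrs unfolding rotation_system_def by (metis eq_card_imp_inj_on)

text \<open>Every neighbour lies on the rotation orbit of any other one, so an orbit of length at most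
  two would miss one of the three neighbours.\<close>

lemma rot_rot_neq: "v \<in> V \<Longrightarrow> u \<in> nbrs E v \<Longrightarrow> rot v (rot v u) \<noteq> u"
proof
  assume v: "v \<in> V" and u: "u \<in> nbrs E v" and involutive: "rot v (rot v u) = u"
  have orbit: "(rot v ^^ k) u \<in> {u, rot v u}" for k
    by (induction k) (auto simp: involutive)
  have "nbrs E v \<subseteq> {u, rot v u}"
  proof
    fix w assume "w \<in> nbrs E v"
    then obtain k where "(rot v ^^ k) u = w"
      using rotation v u unfolding rotation_system_def by blast
    then show "w \<in> {u, rot v u}" using orbit by blast
  qed
  then have "card (nbrs E v) \<le> card {u, rot v u}"
    by (simp add: card_mono)
  also have "\<dots> \<le> 2"
    by (simp add: card_insert_if)
  finally show False using card_nbrs v by simp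
qed

lemma rot_neq: "v \<in> V \<Longrightarrow> u \<in> nbrs E v \<Longrightarrow> rot v u \<noteq> u"
  using rot_rot_neq by fastforce

lemma nbrs_eq_rot_orbit:
  assumes "v \<in> V" "u \<in> nbrs E v"
  shows "nbrs E v = {u, rot v u, rot v (rot v u)}"
proof (rule sym, rule card_subset_eq[OF finite_nbrs])
  have "rot v u \<in> nbrs E v" using rot_in_nbrs assms by blast
  then show "{u, rot v u, rot v (rot v u)} \<subseteq> nbrs E v"
    using rot_in_nbrs assms by blast
  have "rot v u \<noteq> u" "rot v (rot v u) \<noteq> rot v u" "rot v (rot v u) \<noteq> u"
    using assms rot_neq rot_rot_neq \<open>rot v u \<in> nbrs E v\<close> by blast+
  then show "card {u, rot v u, rot v (rot v u)} = card (nbrs E v)"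
    using card_nbrs assms(1) by simp
qed

lemma face_step_Pair [simp]: "face_step rot (u, v) = (v, rot v u)"
  by (simp add: face_step_def)

lemma face_step_in_E: "d \<in> E \<Longrightarrow> face_step rot d \<in> E"
  using rot_in_nbrs edge_in_V edge_sym by (cases d) auto

lemma inj_on_face_step: "inj_on (face_step rot) E"
proof (rule inj_onI)
  fix d d' assume "d \<in> E" "d' \<in> E" "face_step rot d = face_step rot d'"
  obtain a b a' b' where ab: "d = (a, b)" "d' = (a', b')" by fastforce
  then have "b' = b" and rot_eq: "rot b a = rot b a'" using \<open>face_step rot d = _\<close> by auto
  moreover have "b \<in> V" "a \<in> nbrs E b" "a' \<in> nbrs E b"
    using \<open>d \<in> E\<close> \<open>d' \<in> E\<close> ab \<open>b' = b\<close> edge_in_V edge_sym by auto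
  ultimately have "a = a'" using inj_onD[OF inj_on_rot rot_eq] by blast
  then show "d = d'" using ab \<open>b' = b\<close> by simp
qed

text \<open>Extended by the identity outside the darts, the face-tracing map is a permutation
  whose orbits are the faces.\<close>

definition face_perm :: "'a \<times> 'a \<Rightarrow> 'a \<times> 'a" where
  "face_perm d = (if d \<in> E then face_step rot d else d)"

lemma face_perm_permutes: "face_perm permutes E"
proof (rule inj_imp_permutes)
  show "inj_on face_perm E"
    using inj_on_face_step by (simp add: inj_on_def face_perm_def)
qed (auto simp: face_perm_def face_step_in_E finite_E)

lemma face_of_eq_orbit:
  assumes "d \<in> E"
  shows "face_of rot d = orbit face_perm d"
proof -
  have "(face_perm ^^ n) d = (face_step rot ^^ n) d \<and> (face_step rot ^^ n) d \<in> E" for n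
    by (induction n) (use assms face_step_in_E in \<open>auto simp: face_perm_def\<close>)
  moreover have "permutation face_perm"
    using face_perm_permutes finite_E permutation_permutes by blast
  ultimately show ?thesis
    by (simp add: face_of_def orbit_altdef_permutation)
qed

lemma cyclic_on_face:
  assumes "f \<in> faces E rot"
  shows "cyclic_on face_perm f"
proof -
  obtain d where "d \<in> E" "f = face_of rot d" using assms by (auto simp: faces_def)
  then show ?thesis
    using face_of_eq_orbit cyclic_on_orbit[OF face_perm_permutes finite_E] by simp
qed

lemma face_subset_E:
  assumes "f \<in> faces E rot"
  shows "f \<subseteq> E"
proof -
  obtain d where "d \<in> E" "f = face_of rot d" using assms by (auto simp: faces_def)
  then show ?thesis
    using face_of_eq_orbit permutes_orbit_subset[OF face_perm_permutes] by simp
qed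

lemma finite_face: "f \<in> faces E rot \<Longrightarrow> finite f"
  using face_subset_E finite_E finite_subset by blast

lemma finite_faces: "finite (faces E rot)"
  using finite_E by (simp add: faces_def)

lemma face_of_in_faces: "d \<in> E \<Longrightarrow> face_of rot d \<in> faces E rot"
  by (simp add: faces_def)

lemma in_face_of_self: "d \<in> face_of rot d"
proof -
  have "d = (face_step rot ^^ 0) d" by simp
  then show ?thesis unfolding face_of_def by blast
qed

lemma face_of_in_face:
  assumes "f \<in> faces E rot" "d \<in> f"
  shows "face_of rot d = f"
proof -
  have "d \<in> E" using assms face_subset_E by blast
  then have "face_of rot d = orbit face_perm d" by (rule face_of_eq_orbit)
  also have "\<dots> = f" using orbit_cyclic_eq3[OF cyclic_on_face] assms by blast
  finally show ?thesis .
qed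

lemma face_step_in_face:
  assumes "f \<in> faces E rot" "d \<in> f"
  shows "face_step rot d \<in> f"
proof -
  have "face_perm d \<in> f" using cyclic_on_inI[OF cyclic_on_face] assms by blast
  moreover have "d \<in> E" using assms face_subset_E by blast
  ultimately show ?thesis by (simp add: face_perm_def)
qed

lemma face_step_surj:
  assumes "f \<in> faces E rot" "d \<in> f"
  obtains p where "p \<in> f" "face_step rot p = d"
proof -
  let ?p = "inv face_perm d"
  have "face_perm ?p = d"
    using permutes_inverses(1)[OF face_perm_permutes] by simp
  moreover from this have "?p \<in> f"
    using cyclic_on_f_in[OF face_perm_permutes cyclic_on_face[OF assms(1)]] assms(2) by simp
  moreover have "?p \<in> E" using \<open>?p \<in> f\<close> face_subset_E[OF assms(1)] by blast
  ultimately show thesis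
    using that by (simp add: face_perm_def)
qed

lemma card_face_of_le:
  assumes "n > 0" "(face_step rot ^^ n) d = d"
  shows "card (face_of rot d) \<le> n"
proof -
  have "face_of rot d \<subseteq> (\<lambda>m. (face_step rot ^^ m) d) ` {..<n}"
  proof
    fix e assume "e \<in> face_of rot d"
    then obtain k where "e = (face_step rot ^^ k) d" by (auto simp: face_of_def)
    also have "\<dots> = (face_step rot ^^ (k mod n)) d" using funpow_mod_eq[OF assms(2)] by simp
    finally show "e \<in> (\<lambda>m. (face_step rot ^^ m) d) ` {..<n}" using assms(1) by simp
  qed
  then have "card (face_of rot d) \<le> card ((\<lambda>m. (face_step rot ^^ m) d) ` {..<n})"
    by (simp add: card_mono)
  also have "\<dots> \<le> n" using card_image_le[of "{..<n}"] by simp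
  finally show ?thesis .
qed

end

locale fullerene_map = cubic_map +
  assumes penta_or_hexa_faces: "f \<in> faces E rot \<Longrightarrow> penta_or_hexa f"
begin

lemma card_face: "f \<in> faces E rot \<Longrightarrow> card f \<in> {5, 6}"
  using penta_or_hexa_faces by (simp add: penta_or_hexa_def)

lemma fst_face_eq:
  assumes "f \<in> faces E rot" "d \<in> f" "d' \<in> f" "fst d = fst d'"
  shows "d = d'"
proof -
  have "inj_on fst f"
    using assms(1) penta_or_hexa_faces finite_face by (simp add: penta_or_hexa_def eq_card_imp_inj_on)
  then show ?thesis using assms(2-4) by (blast dest: inj_onD)
qed

lemma snd_in_fst_face:
  assumes "f \<in> faces E rot" "d \<in> f"
  shows "snd d \<in> fst ` f"
proof (rule rev_image_eqI)
  show "face_step rot d \<in> f" using face_step_in_face assms .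
qed (simp add: face_step_def)

lemma snd_face_eq:
  assumes "f \<in> faces E rot" "d \<in> f" "d' \<in> f" "snd d = snd d'"
  shows "d = d'"
proof -
  have "face_step rot d \<in> f" "face_step rot d' \<in> f"
    using face_step_in_face assms(1-3) by blast+
  moreover have "fst (face_step rot d) = fst (face_step rot d')"
    using assms(4) by (simp add: face_step_def)
  ultimately have "face_step rot d = face_step rot d'"
    using fst_face_eq[OF assms(1)] by blast
  moreover have "d \<in> E" "d' \<in> E" using face_subset_E assms(1-3) by blast+
  ultimately show ?thesis using inj_onD[OF inj_on_face_step] by blast
qed

lemma face_pred:
  assumes "f \<in> faces E rot" "(b, c) \<in> f"
  obtains a where "(a, b) \<in> f" "rot b a = c"
proof -
  obtain p where p: "p \<in> f" "face_step rot p = (b, c)"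
    using face_step_surj assms by blast
  obtain a b' where "p = (a, b')" by fastforce
  with p have "(a, b) \<in> f" "rot b a = c" by auto
  then show thesis by (rule that)
qed

lemma card_faces_at:
  assumes "v \<in> V"
  shows "card {f \<in> faces E rot. v \<in> fst ` f} = 3"
proof -
  let ?N = "Pair v ` nbrs E v"
  have eq: "{f \<in> faces E rot. v \<in> fst ` f} = face_of rot ` ?N"
  proof
    show "face_of rot ` ?N \<subseteq> {f \<in> faces E rot. v \<in> fst ` f}"
    proof
      fix f assume "f \<in> face_of rot ` ?N"
      then obtain u where "(v, u) \<in> E" "f = face_of rot (v, u)" by auto
      moreover have "(v, u) \<in> face_of rot (v, u)" by (rule in_face_of_self)
      ultimately show "f \<in> {f \<in> faces E rot. v \<in> fst ` f}"
        using face_of_in_faces by force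
    qed
    show "{f \<in> faces E rot. v \<in> fst ` f} \<subseteq> face_of rot ` ?N"
    proof
      fix f assume "f \<in> {f \<in> faces E rot. v \<in> fst ` f}"
      then obtain u where f: "f \<in> faces E rot" "(v, u) \<in> f" by force
      then have "(v, u) \<in> E" using face_subset_E by blast
      then have "(v, u) \<in> ?N" by simp
      moreover have "f = face_of rot (v, u)" using face_of_in_face f by simp
      ultimately show "f \<in> face_of rot ` ?N" by blast
    qed
  qed
  have "inj_on (face_of rot) ?N"
  proof (rule inj_onI)
    fix d d' assume d: "d \<in> ?N" "d' \<in> ?N" and eq: "face_of rot d = face_of rot d'"
    have "face_of rot d \<in> faces E rot" using d face_of_in_faces by auto
    moreover have "d \<in> face_of rot d" by (rule in_face_of_self)
    moreover have "d' \<in> face_of rot d" unfolding eq by (rule in_face_of_self)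
    ultimately show "d = d'" using fst_face_eq d by auto
  qed
  then have "card (face_of rot ` ?N) = card (nbrs E v)"
    by (simp add: card_image inj_on_def)
  then show ?thesis using eq card_nbrs assms by simp
qed

lemma face_not_triangle:
  assumes f: "f \<in> faces E rot" and "(a, b) \<in> f" "(b, c) \<in> f" "(c, a) \<in> f"
  shows False
proof -
  have step: "face_step rot d = d'" if "d \<in> f" "d' \<in> f" "snd d = fst d'" for d d'
    using fst_face_eq[OF f face_step_in_face[OF f \<open>d \<in> f\<close>] \<open>d' \<in> f\<close>] that(3)
    by (simp add: face_step_def)
  have "rot b a = c" "rot c b = a" "rot a c = b"
    using step[OF assms(2,3)] step[OF assms(3,4)] step[OF assms(4,2)] by simp_all
  then have "(face_step rot ^^ 3) (a, b) = (a, b)" by (simp add: numeral_3_eq_3)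
  then have "card (face_of rot (a, b)) \<le> 3" by (rule card_face_of_le[rotated]) simp
  moreover have "face_of rot (a, b) = f" using face_of_in_face f assms(2) by blast
  ultimately show False using card_face[OF f] by auto
qed

end

section \<open>Centres of a perfect code on the faces of a fullerene\<close>

locale coded_fullerene_map = fullerene_map +
  fixes D :: "'a set"
  assumes perfect_code: "perfect_code V E D"
begin

lemma code_subset_V: "D \<subseteq> V"
  using perfect_code by (simp add: perfect_code_def)

lemma finite_code: "finite D"
  using code_subset_V finite_V finite_subset by blast

definition face_centres :: "('a \<times> 'a) set \<Rightarrow> 'a set" where
  "face_centres f = D \<inter> fst ` f"

definition face_closed_nbrs :: "('a \<times> 'a) set \<Rightarrow> 'a \<Rightarrow> 'a set" where
  "face_closed_nbrs f c =
     insert c ({snd d | d. d \<in> f \<and> fst d = c} \<union> {fst d | d. d \<in> f \<and> snd d = c})"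

lemma finite_face_centres: "finite (face_centres f)"
  using finite_code by (simp add: face_centres_def)

lemma face_closed_nbrs_subset_fst:
  assumes "f \<in> faces E rot" "c \<in> fst ` f"
  shows "face_closed_nbrs f c \<subseteq> fst ` f"
proof
  fix v assume "v \<in> face_closed_nbrs f c"
  then consider "v = c" | d where "d \<in> f" "snd d = v" | d where "d \<in> f" "fst d = v"
    by (auto simp: face_closed_nbrs_def)
  then show "v \<in> fst ` f"
  proof cases
    case 1
    then show ?thesis using assms(2) by simp
  next
    case (2 d)
    then show ?thesis using snd_in_fst_face assms(1) by blast
  next
    case (3 d)
    then show ?thesis by (metis image_eqI)
  qed
qed

lemma face_closed_nbrs_subset_closed_nbrs:
  assumes "f \<in> faces E rot"
  shows "face_closed_nbrs f c \<subseteq> closed_nbrs E c"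
proof
  fix v assume "v \<in> face_closed_nbrs f c"
  then obtain d where "v = c \<or> d \<in> f \<and> (d = (c, v) \<or> d = (v, c))"
    by (auto simp: face_closed_nbrs_def)
  then show "v \<in> closed_nbrs E c"
    using face_subset_E[OF assms] edge_sym by (auto simp: closed_nbrs_def)
qed

lemma card_face_closed_nbrs:
  assumes f: "f \<in> faces E rot" and c: "c \<in> fst ` f"
  shows "3 \<le> card (face_closed_nbrs f c)"
proof -
  obtain q where cq: "(c, q) \<in> f" using c by force
  then obtain x where xc: "(x, c) \<in> f" and "rot c x = q" using face_pred f by blast
  have xcE: "(x, c) \<in> E" and cqE: "(c, q) \<in> E" using xc cq face_subset_E f by blast+
  then have "c \<in> V" "x \<in> nbrs E c" using edge_in_V edge_sym by auto
  then have "q \<noteq> x" using rot_neq \<open>rot c x = q\<close> by blast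
  moreover have "x \<noteq> c" "q \<noteq> c" using xcE cqE no_loop by blast+
  ultimately have "card {c, q, x} = 3" by simp
  moreover have "q \<in> {snd d | d. d \<in> f \<and> fst d = c}" "x \<in> {fst d | d. d \<in> f \<and> snd d = c}"
    using cq xc by force+
  then have "{c, q, x} \<subseteq> face_closed_nbrs f c" by (auto simp: face_closed_nbrs_def)
  moreover have "finite (face_closed_nbrs f c)"
    using face_closed_nbrs_subset_fst[OF f c] finite_face[OF f] finite_subset by blast
  ultimately show ?thesis using card_mono by (metis (no_types))
qed

text \<open>The closed neighbourhoods of the centres are disjoint, and each meets a face through its
  centre in at least three vertices; a face has at most six vertices.\<close>

lemma face_centres_bound:
  assumes f: "f \<in> faces E rot"
  shows "3 * card (face_centres f) + card (fst ` f - (\<Union>c\<in>face_centres f. face_closed_nbrs f c)) \<le> 6"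
proof -
  let ?U = "\<Union>c\<in>face_centres f. face_closed_nbrs f c"
  have fin: "finite (fst ` f)" using finite_face[OF f] by blast
  have sub: "face_closed_nbrs f c \<subseteq> fst ` f" if "c \<in> face_centres f" for c
    using face_closed_nbrs_subset_fst[OF f] that by (simp add: face_centres_def)
  then have U_sub: "?U \<subseteq> fst ` f" by blast
  have disjoint: "face_closed_nbrs f c \<inter> face_closed_nbrs f c' = {}"
    if "c \<in> face_centres f" "c' \<in> face_centres f" "c \<noteq> c'" for c c'
  proof -
    have "closed_nbrs E c \<inter> closed_nbrs E c' = {}"
      using perfect_code_closed_nbrs_disjoint[OF perfect_code] that
      by (simp add: face_centres_def)
    then show ?thesis using face_closed_nbrs_subset_closed_nbrs[OF f] by blast
  qed
  have "3 * card (face_centres f) = (\<Sum>c\<in>face_centres f. 3)" by simp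
  also have "\<dots> \<le> (\<Sum>c\<in>face_centres f. card (face_closed_nbrs f c))"
    using card_face_closed_nbrs[OF f] by (intro sum_mono) (simp add: face_centres_def)
  also have "\<dots> = card ?U"
  proof (rule card_UN_disjoint[symmetric])
    show "finite (face_centres f)" by (rule finite_face_centres)
    show "\<forall>c\<in>face_centres f. finite (face_closed_nbrs f c)"
      using sub fin finite_subset by blast
    show "\<forall>c\<in>face_centres f. \<forall>c'\<in>face_centres f. c \<noteq> c' \<longrightarrow>
        face_closed_nbrs f c \<inter> face_closed_nbrs f c' = {}"
      using disjoint by blast
  qed
  finally have "3 * card (face_centres f) + card (fst ` f - ?U) \<le> card (fst ` f)"
    using card_Diff_subset[OF finite_subset[OF U_sub fin] U_sub] card_mono[OF fin U_sub] by linarith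
  also have "\<dots> \<le> card f" using card_image_le finite_face[OF f] by blast
  also have "\<dots> \<le> 6" using card_face[OF f] by auto
  finally show ?thesis .
qed

lemma card_face_centres_le_2:
  assumes "f \<in> faces E rot"
  shows "card (face_centres f) \<le> 2"
  using face_centres_bound[OF assms] by linarith

lemma card_face_centres_le_1:
  assumes f: "f \<in> faces E rot" and x: "x \<in> fst ` f"
    and uncovered: "\<And>c. c \<in> face_centres f \<Longrightarrow> x \<notin> face_closed_nbrs f c"
  shows "card (face_centres f) \<le> 1"
proof -
  let ?R = "fst ` f - (\<Union>c\<in>face_centres f. face_closed_nbrs f c)"
  have "x \<in> ?R" using x uncovered by blast
  moreover have "finite ?R" using finite_face[OF f] by blast
  ultimately have "card ?R > 0" using card_gt_0_iff by blast
  then show ?thesis using face_centres_bound[OF f] by linarith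
qed

definition single_centre_faces :: "('a \<times> 'a) set set" where
  "single_centre_faces = {f \<in> faces E rot. card (face_centres f) = 1}"

text \<open>Two faces are linked if they lie on the two sides of an edge and each of them continues
  from that edge to a centre.\<close>

definition linked_faces :: "('a \<times> 'a) set \<Rightarrow> ('a \<times> 'a) set \<Rightarrow> bool" where
  "linked_faces f g \<longleftrightarrow>
     (\<exists>a b. (a, b) \<in> f \<and> (b, a) \<in> g \<and> rot b a \<in> D \<and> rot a b \<in> D)"

lemma linked_faces_sym: "linked_faces f g \<Longrightarrow> linked_faces g f"
  unfolding linked_faces_def by blast

lemma not_linked_faces_self:
  assumes f: "f \<in> faces E rot"
  shows "\<not> linked_faces f f"
proof
  assume "linked_faces f f"
  then obtain a b where ab: "(a, b) \<in> f" "(b, a) \<in> f" unfolding linked_faces_def by blast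
  have "(b, rot b a) \<in> f" using face_step_in_face[OF f ab(1)] by simp
  then have "(b, rot b a) = (b, a)" using fst_face_eq[OF f _ ab(2)] by simp
  then have "rot b a = a" by simp
  moreover have "b \<in> V" "a \<in> nbrs E b"
    using ab(1) face_subset_E[OF f] edge_in_V edge_sym by auto
  ultimately show False using rot_neq by blast
qed

lemma linked_faces_unique:
  assumes f: "f \<in> single_centre_faces" and g: "g \<in> faces E rot" and g': "g' \<in> faces E rot"
    and "linked_faces f g" "linked_faces f g'"
  shows "g = g'"
proof -
  have fF: "f \<in> faces E rot" and "card (face_centres f) = 1"
    using f by (auto simp: single_centre_faces_def)
  then obtain c where c: "face_centres f = {c}" by (auto simp: card_1_singleton_iff)
  obtain a b where ab: "(a, b) \<in> f" "(b, a) \<in> g" "rot b a \<in> D"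
    using \<open>linked_faces f g\<close> unfolding linked_faces_def by blast
  obtain a' b' where ab': "(a', b') \<in> f" "(b', a') \<in> g'" "rot b' a' \<in> D"
    using \<open>linked_faces f g'\<close> unfolding linked_faces_def by blast
  have succ: "(b, rot b a) \<in> f" "(b', rot b' a') \<in> f"
    using face_step_in_face[OF fF ab(1)] face_step_in_face[OF fF ab'(1)] by simp_all
  then have "rot b a \<in> face_centres f" "rot b' a' \<in> face_centres f"
    using snd_in_fst_face[OF fF] ab(3) ab'(3) by (force simp: face_centres_def)+
  then have "rot b a = rot b' a'" using c by simp
  then have "(b, rot b a) = (b', rot b' a')" using snd_face_eq[OF fF succ] by simp
  then have "(a, b) = (a', b')" using snd_face_eq[OF fF ab(1) ab'(1)] by simp
  then show ?thesis
    using face_of_in_face[OF g ab(2)] face_of_in_face[OF g' ab'(2)] by simp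
qed

text \<open>On the face beyond the edge xw, the neighbours of x are w and the third neighbour of x, and
  neither of them is the centre rot x w dominating x. So x lies in no face neighbourhood of a
  centre of that face, which leaves room for a single centre only.\<close>

lemma opposite_face_single_centre:
  assumes xw: "(x, w) \<in> E" and c: "rot x w \<in> D" and c': "rot w x \<in> D" and w: "w \<notin> D"
  shows "face_of rot (x, w) \<in> single_centre_faces"
proof -
  define g where "g = face_of rot (x, w)"
  have g: "g \<in> faces E rot" using face_of_in_faces[OF xw] by (simp add: g_def)
  have xwg: "(x, w) \<in> g" unfolding g_def by (rule in_face_of_self)
  have xV: "x \<in> V" and w_nbr: "w \<in> nbrs E x" using xw edge_in_V by auto
  then have xc: "(x, rot x w) \<in> E" using rot_in_nbrs by simp
  have x: "x \<notin> D" using perfect_code_not_adjacent[OF perfect_code _ c] xc by blast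
  have "(w, rot w x) \<in> g" using face_step_in_face[OF g xwg] by simp
  then have "rot w x \<in> face_centres g"
    using snd_in_fst_face[OF g] c' by (force simp: face_centres_def)
  then have "card (face_centres g) > 0"
    using finite_face_centres card_gt_0_iff by blast
  moreover have "x \<notin> face_closed_nbrs g c''" if c'': "c'' \<in> face_centres g" for c''
  proof
    assume "x \<in> face_closed_nbrs g c''"
    moreover have c''D: "c'' \<in> D" using c'' by (simp add: face_centres_def)
    ultimately consider "(c'', x) \<in> g" | "(x, c'') \<in> g"
      using x by (force simp: face_closed_nbrs_def)
    then show False
    proof cases
      case 1
      have "(x, rot x c'') \<in> g" using face_step_in_face[OF g 1] by simp
      then have "(x, rot x c'') = (x, w)" using fst_face_eq[OF g _ xwg] by simp
      then have "rot x c'' = w" by simp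
      moreover have "(x, c'') \<in> E" using 1 face_subset_E[OF g] edge_sym by blast
      then have "c'' = rot x w"
        using perfect_code_adjacent_unique[OF perfect_code c''D c _ xc] by blast
      ultimately show False using rot_rot_neq[OF xV w_nbr] by simp
    next
      case 2
      then have "(x, c'') = (x, w)" using fst_face_eq[OF g _ xwg] by simp
      then have "c'' = w" by simp
      then show False using c''D w by simp
    qed
  qed
  then have "card (face_centres g) \<le> 1"
    using card_face_centres_le_1[OF g] xwg by force
  ultimately show ?thesis using g by (simp add: single_centre_faces_def g_def)
qed

text \<open>Walking back from the centre c of f along f through its neighbour x to the next vertex w,
  the edge xw is the one shared with the linked face.\<close>

lemma linked_face_exists:
  assumes f: "f \<in> single_centre_faces"
  obtains g where "g \<in> single_centre_faces" "linked_faces f g"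
proof -
  have fF: "f \<in> faces E rot" and "card (face_centres f) = 1"
    using f by (auto simp: single_centre_faces_def)
  then obtain c where c: "face_centres f = {c}" by (auto simp: card_1_singleton_iff)
  then have cD: "c \<in> D" and "c \<in> fst ` f" by (auto simp: face_centres_def)
  then obtain q where cq: "(c, q) \<in> f" by force
  obtain x where xc: "(x, c) \<in> f" using face_pred[OF fF cq] by blast
  obtain w where wx: "(w, x) \<in> f" and rot_x: "rot x w = c" using face_pred[OF fF xc] by blast
  obtain w' where w'w: "(w', w) \<in> f" and rot_w: "rot w w' = x" using face_pred[OF fF wx] by blast
  have xw: "(x, w) \<in> E" and cx: "(c, x) \<in> E" and ww': "(w, w') \<in> E"
    using xc wx w'w face_subset_E[OF fF] edge_sym by blast+
  then have xV: "x \<in> V" and wV: "w \<in> V" using edge_in_V by blast+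
  have x: "x \<notin> D" using perfect_code_not_adjacent[OF perfect_code cD] cx by blast
  have w: "w \<notin> D"
  proof
    assume "w \<in> D"
    then have "w = c"
      using perfect_code_adjacent_unique[OF perfect_code _ cD xw] cx edge_sym by blast
    then show False using rot_x rot_neq[OF xV] xw by simp
  qed
  obtain c' where c': "c' \<in> D" "(w, c') \<in> E" using perfect_code_dominates[OF perfect_code wV w] .
  have "c' \<noteq> w'"
  proof
    assume "c' = w'"
    then have "w' \<in> face_centres f" using c'(1) w'w by (force simp: face_centres_def)
    then have "w' = c" using c by simp
    then show False using face_not_triangle[OF fF _ wx xc] w'w by simp
  qed
  moreover have "c' \<in> {w', x, rot w x}"
    using nbrs_eq_rot_orbit[OF wV] ww' rot_w c'(2) by (metis mem_nbrs)
  ultimately have rot_w_x: "rot w x \<in> D" using c'(1) x by auto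
  define g where "g = face_of rot (x, w)"
  have "g \<in> single_centre_faces"
    unfolding g_def using opposite_face_single_centre[OF xw _ rot_w_x w] rot_x cD by simp
  moreover have "(x, w) \<in> g" unfolding g_def by (rule in_face_of_self)
  then have "linked_faces f g"
    unfolding linked_faces_def using wx rot_x cD rot_w_x by blast
  ultimately show thesis by (rule that)
qed

lemma even_card_single_centre_faces: "even (card single_centre_faces)"
proof (rule even_card_if_perfectly_matched)
  fix f assume f: "f \<in> single_centre_faces"
  then obtain g where "g \<in> single_centre_faces" "linked_faces f g" by (rule linked_face_exists)
  moreover have "g' = g" if "g' \<in> single_centre_faces" "linked_faces f g'" for g'
    using linked_faces_unique[OF f] that calculation by (auto simp: single_centre_faces_def)
  ultimately show "\<exists>!g\<in>single_centre_faces. linked_faces f g" by blast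
  show "\<not> linked_faces f f" using f not_linked_faces_self by (simp add: single_centre_faces_def)
qed (rule linked_faces_sym)

lemma sum_card_face_centres: "(\<Sum>f\<in>faces E rot. card (face_centres f)) = 3 * card D"
proof -
  have "(\<Sum>f\<in>faces E rot. card (face_centres f)) =
      (\<Sum>f\<in>faces E rot. card {c \<in> D. c \<in> fst ` f})"
    by (simp add: face_centres_def Int_def)
  also have "\<dots> = (\<Sum>c\<in>D. card {f \<in> faces E rot. c \<in> fst ` f})"
    using sum.swap_restrict[OF finite_faces finite_code, of "\<lambda>_ _. 1 :: nat" "\<lambda>f c. c \<in> fst ` f"]
    by simp
  also have "\<dots> = (\<Sum>c\<in>D. 3)"
    using card_faces_at code_subset_V by (intro sum.cong) auto
  finally show ?thesis by simp
qed

lemma even_card_code: "even (card D)"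
proof -
  have "odd (card (face_centres f)) \<longleftrightarrow> card (face_centres f) = 1"
    if "f \<in> faces E rot" for f
  proof -
    have "card (face_centres f) \<in> {0, 1, 2}" using card_face_centres_le_2[OF that] by auto
    then show ?thesis by auto
  qed
  then have "{f \<in> faces E rot. odd (card (face_centres f))} = single_centre_faces"
    unfolding single_centre_faces_def by blast
  then have "even (\<Sum>f\<in>faces E rot. card (face_centres f))"
    using even_card_single_centre_faces by (simp add: even_sum_iff[OF finite_faces])
  then show ?thesis by (simp add: sum_card_face_centres)
qed

end

theorem mainTheorem1:
  fixes V :: "'a set" and E :: "('a \<times> 'a) set"
  assumes "fullerene V E"
    and "perfect_star_packing V E"
  shows "8 dvd card V"
proof -
  obtain rot where graph: "simple_graph V E" "cubic V E"
    and map: "rotation_system V E rot" "\<forall>f\<in>faces E rot. penta_or_hexa f"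
    using assms(1) unfolding fullerene_def plane_embedding_def by blast
  interpret fullerene_map V E rot
    by unfold_locales (use graph map in blast)+
  obtain D where "perfect_code V E D"
    using perfect_code_of_perfect_star_packing assms(2) by blast
  then interpret coded_fullerene_map V E rot D by unfold_locales
  have "card V = 4 * card D" by (rule card_perfect_code[OF perfect_code])
  then show ?thesis using even_card_code by auto
qed

end
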